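(* Let $\mathbb R^n$ and $\mathbb R_+=[0,\infty)$ carry the bounded coarse structures of their Euclidean metrics and let $\mathbb R^n\times\mathbb R_+$ carry the product coarse structure. Then the inclusion $i\colon\mathbb R_+\to\mathbb R^n\times\mathbb R_+$, $i(s)=(0,s)$, is a coarse homotopy-equivalence.
   Context: The bounded coarse structure on a metric space has as entourages the subsets of the sets $D_R=\{(x,y):d(x,y)<R\}$. The product coarse structure on $X\times Y$ has as entourages the subsets of finite unions of finite compositions of sets $M\times N$ with $M$, $N$ entourages of $X$, $Y$ (composition $M_1M_2=\{(x,z):\exists y,(x,y)\in M_1,(y,z)\in M_2\}$). In a coarse space, $M(x)=\{y:(y,x)\in M\}$ and a bounded set is one contained in some $M(x)$; a coarse map carries entourages into entourages and has bounded preimages of bounded sets. A generalised ray is $[0,\infty)$ with a unital coarse structure (diagonal contained in an entourage) such that entourages are open and bounded sets have compact closure. A coarse homotopy is a map $F\colon X\times R\to Y$ with $R$ a generalised ray such that $(x,t)\mapsto(F(x,t),t)$ is a coarse map $X\times R\to Y\times R$; for every bounded $B\subseteq X$ there is $T\in R$ such that for $x\in B$, $t\mapsto F(x,t)$ is constant for $t\ge T$; and $x\mapsto\lim_{t\to\infty}F(x,t)$ is coarse. Two coarse maps are coarsely homotopic if joined by a finite chain of pairs $F(-,0),F(-,\infty)$; a coarse map $f\colon X\to Y$ is a coarse homotopy-equivalence if there is a coarse $g\colon Y\to X$ with $g\circ f$ and $f\circ g$ coarsely homotopic to the identities. *)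

theory Defs
  imports "HOL-Analysis.Analysis"
begin

text \<open>A coarse space is represented by a carrier set X together with its set E of
entourages (subsets of X \<times> X).\<close>

definition bounded_coarse :: "'a::metric_space set \<Rightarrow> ('a \<times> 'a) set set" where
  "bounded_coarse S = {M. M \<subseteq> S \<times> S \<and> (\<exists>R. \<forall>(x, y)\<in>M. dist x y < R)}"

definition prod_ent :: "('a \<times> 'a) set \<Rightarrow> ('b \<times> 'b) set \<Rightarrow> (('a \<times> 'b) \<times> ('a \<times> 'b)) set" where
  "prod_ent M N = {((x, y), (x', y')). (x, x') \<in> M \<and> (y, y') \<in> N}"

inductive_set prod_comps :: "('a \<times> 'a) set set \<Rightarrow> ('b \<times> 'b) set set
    \<Rightarrow> (('a \<times> 'b) \<times> ('a \<times> 'b)) set set"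
  for EA :: "('a \<times> 'a) set set" and EB :: "('b \<times> 'b) set set" where
  basic: "M \<in> EA \<Longrightarrow> N \<in> EB \<Longrightarrow> prod_ent M N \<in> prod_comps EA EB"
| comp: "P \<in> prod_comps EA EB \<Longrightarrow> Q \<in> prod_comps EA EB \<Longrightarrow> P O Q \<in> prod_comps EA EB"

definition prod_coarse :: "('a \<times> 'a) set set \<Rightarrow> ('b \<times> 'b) set set
    \<Rightarrow> (('a \<times> 'b) \<times> ('a \<times> 'b)) set set" where
  "prod_coarse EA EB = {E. \<exists>F. finite F \<and> F \<subseteq> prod_comps EA EB \<and> E \<subseteq> \<Union>F}"

definition cbounded :: "('a \<times> 'a) set set \<Rightarrow> 'a set \<Rightarrow> bool" where
  "cbounded E B \<longleftrightarrow> (\<exists>M\<in>E. \<exists>x. B \<subseteq> {y. (y, x) \<in> M})"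

definition coarse_map :: "'a set \<Rightarrow> ('a \<times> 'a) set set \<Rightarrow> 'b set \<Rightarrow> ('b \<times> 'b) set set
    \<Rightarrow> ('a \<Rightarrow> 'b) \<Rightarrow> bool" where
  "coarse_map X EA Y EB f \<longleftrightarrow>
     f ` X \<subseteq> Y \<and>
     (\<forall>M\<in>EA. (\<lambda>(x, x'). (f x, f x')) ` M \<in> EB) \<and>
     (\<forall>B. cbounded EB B \<longrightarrow> cbounded EA (f -` B \<inter> X))"

definition coarse_structure :: "'a set \<Rightarrow> ('a \<times> 'a) set set \<Rightarrow> bool" where
  "coarse_structure X E \<longleftrightarrow>
     E \<subseteq> Pow (X \<times> X) \<and> {} \<in> E \<and>
     (\<forall>M\<in>E. \<forall>N. N \<subseteq> M \<longrightarrow> N \<in> E) \<and>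
     (\<forall>M\<in>E. \<forall>N\<in>E. M \<union> N \<in> E) \<and>
     (\<forall>M\<in>E. M\<inverse> \<in> E) \<and>
     (\<forall>M\<in>E. \<forall>N\<in>E. M O N \<in> E)"

text \<open>A generalised ray: a coarse structure ER on [0,\<infinity>) which is unital, whose
entourages are open (every entourage lies in an open entourage, topology of
[0,\<infinity>)\<times>[0,\<infinity>)), and whose bounded sets have compact closure.\<close>
definition gen_ray :: "(real \<times> real) set set \<Rightarrow> bool" where
  "gen_ray ER \<longleftrightarrow>
     coarse_structure {0..} ER \<and>
     (\<exists>M\<in>ER. Id_on {0..} \<subseteq> M) \<and>
     (\<forall>M\<in>ER. \<exists>U\<in>ER. M \<subseteq> U \<and> openin (top_of_set ({0..} \<times> {0..})) U) \<and>
     (\<forall>B. cbounded ER B \<longrightarrow> compact (closure B))"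

text \<open>x \<mapsto> lim_{t\<rightarrow>\<infinity>} F(x,t) (the eventual value).\<close>
definition htpy_limit :: "('a \<times> real \<Rightarrow> 'b) \<Rightarrow> 'a \<Rightarrow> 'b" where
  "htpy_limit F x = (THE l. \<exists>T\<ge>0. \<forall>t\<ge>T. F (x, t) = l)"

definition coarse_homotopy :: "'a set \<Rightarrow> ('a \<times> 'a) set set \<Rightarrow> 'b set \<Rightarrow> ('b \<times> 'b) set set
    \<Rightarrow> (real \<times> real) set set \<Rightarrow> ('a \<times> real \<Rightarrow> 'b) \<Rightarrow> bool" where
  "coarse_homotopy X EA Y EB ER F \<longleftrightarrow>
     gen_ray ER \<and>
     coarse_map (X \<times> {0..}) (prod_coarse EA ER) (Y \<times> {0..}) (prod_coarse EB ER)
        (\<lambda>(x, t). (F (x, t), t)) \<and>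
     (\<forall>B. B \<subseteq> X \<and> cbounded EA B \<longrightarrow>
        (\<exists>T\<ge>0. \<forall>x\<in>B. \<forall>t\<ge>T. \<forall>t'\<ge>T. F (x, t) = F (x, t'))) \<and>
     coarse_map X EA Y EB (htpy_limit F)"

definition htpy_step :: "'a set \<Rightarrow> ('a \<times> 'a) set set \<Rightarrow> 'b set \<Rightarrow> ('b \<times> 'b) set set
    \<Rightarrow> ('a \<Rightarrow> 'b) \<Rightarrow> ('a \<Rightarrow> 'b) \<Rightarrow> bool" where
  "htpy_step X EA Y EB f g \<longleftrightarrow>
     (\<exists>ER F. coarse_homotopy X EA Y EB ER F \<and>
        (\<forall>x\<in>X. f x = F (x, 0)) \<and> (\<forall>x\<in>X. g x = htpy_limit F x))"

definition coarsely_homotopic :: "'a set \<Rightarrow> ('a \<times> 'a) set set \<Rightarrow> 'b set \<Rightarrow> ('b \<times> 'b) set set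
    \<Rightarrow> ('a \<Rightarrow> 'b) \<Rightarrow> ('a \<Rightarrow> 'b) \<Rightarrow> bool" where
  "coarsely_homotopic X EA Y EB f g \<longleftrightarrow>
     coarse_map X EA Y EB f \<and> coarse_map X EA Y EB g \<and>
     (\<lambda>u v. htpy_step X EA Y EB u v \<or> htpy_step X EA Y EB v u)\<^sup>*\<^sup>* f g"

definition coarse_htpy_equiv :: "'a set \<Rightarrow> ('a \<times> 'a) set set \<Rightarrow> 'b set \<Rightarrow> ('b \<times> 'b) set set
    \<Rightarrow> ('a \<Rightarrow> 'b) \<Rightarrow> bool" where
  "coarse_htpy_equiv X EA Y EB f \<longleftrightarrow>
     coarse_map X EA Y EB f \<and>
     (\<exists>g. coarse_map Y EB X EA g \<and>
        coarsely_homotopic X EA X EA (g \<circ> f) id \<and>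
        coarsely_homotopic Y EB Y EB (f \<circ> g) id)"

end

theory Submission
  imports Defs
begin

text \<open>
  The product of two bounded coarse structures is the bounded coarse structure of the product
  metric, so every coarse condition becomes a metric estimate. The map \<open>g (x, t) = |x| + t\<close>
  is a left inverse of \<open>i\<close>, and \<open>i \<circ> g\<close> is joined to the identity by the homotopy
  \<open>H\<^sub>s (x, t)\<close> that moves every coordinate of \<open>x\<close> by \<open>s\<close> towards \<open>0\<close> (stopping at \<open>0\<close>) and adds
  \<open>min s |x|\<close> to \<open>t\<close>. Thus \<open>H\<^sub>0\<close> is the identity and \<open>H\<^sub>s (x, t) = (0, t + |x|)\<close> once
  \<open>s \<ge> |x|\<close>. The map \<open>(x, t, s) \<mapsto> (H\<^sub>s (x, t), s)\<close> is Lipschitz, and it is proper because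
  \<open>|x|\<close> is bounded by a multiple of \<open>|H\<^sub>s (x, t)| + s\<close>.
\<close>

lemma dist_Pair_le: "dist (a, b) (c, d) \<le> dist a c + dist b d"
  unfolding dist_Pair_Pair by (metis sqrt_sum_squares_le_sum zero_le_dist)

lemma bounded_coarse_subset: "M \<in> bounded_coarse S \<Longrightarrow> N \<subseteq> M \<Longrightarrow> N \<in> bounded_coarse S"
  unfolding bounded_coarse_def by blast

lemma bounded_coarse_Un:
  assumes "M \<in> bounded_coarse S" "N \<in> bounded_coarse S"
  shows "M \<union> N \<in> bounded_coarse S"
proof -
  obtain R1 R2 where "\<forall>(x, y)\<in>M. dist x y < R1" "\<forall>(x, y)\<in>N. dist x y < R2"
    using assms unfolding bounded_coarse_def by blast
  then have "\<forall>(x, y)\<in>M \<union> N. dist x y < max R1 R2"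
    by fastforce
  then show ?thesis
    using assms unfolding bounded_coarse_def by blast
qed

lemma bounded_coarse_Union:
  "finite F \<Longrightarrow> F \<subseteq> bounded_coarse S \<Longrightarrow> \<Union>F \<in> bounded_coarse S"
proof (induction F rule: finite_induct)
  case empty
  then show ?case by (simp add: bounded_coarse_def)
next
  case (insert M F)
  then show ?case by (simp add: bounded_coarse_Un)
qed

lemma bounded_coarse_relcomp:
  assumes "M \<in> bounded_coarse S" "N \<in> bounded_coarse S"
  shows "M O N \<in> bounded_coarse S"
proof -
  obtain R1 R2 where R: "\<forall>(x, y)\<in>M. dist x y < R1" "\<forall>(x, y)\<in>N. dist x y < R2"
    using assms unfolding bounded_coarse_def by blast
  have "dist x z < R1 + R2" if "(x, y) \<in> M" "(y, z) \<in> N" for x y z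
    using R that dist_triangle[of x z y] by fastforce
  then have "\<forall>(x, z)\<in>M O N. dist x z < R1 + R2"
    by blast
  then show ?thesis
    using assms unfolding bounded_coarse_def by blast
qed

lemma bounded_coarse_converse:
  assumes "M \<in> bounded_coarse S"
  shows "M\<inverse> \<in> bounded_coarse S"
proof -
  obtain R where "M \<subseteq> S \<times> S" "\<forall>(x, y)\<in>M. dist x y < R"
    using assms unfolding bounded_coarse_def by blast
  then have "M\<inverse> \<subseteq> S \<times> S" "\<forall>(x, y)\<in>M\<inverse>. dist x y < R"
    by (auto simp: dist_commute)
  then show ?thesis
    unfolding bounded_coarse_def by blast
qed

lemma coarse_structure_bounded_coarse: "coarse_structure S (bounded_coarse S)"
proof -
  have "bounded_coarse S \<subseteq> Pow (S \<times> S)" "{} \<in> bounded_coarse S"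
    by (auto simp: bounded_coarse_def)
  then show ?thesis
    unfolding coarse_structure_def
    by (simp add: bounded_coarse_subset bounded_coarse_Un bounded_coarse_relcomp
        bounded_coarse_converse)
qed

lemma prod_ent_bounded_coarse:
  assumes "M \<in> bounded_coarse A" "N \<in> bounded_coarse B"
  shows "prod_ent M N \<in> bounded_coarse (A \<times> B)"
proof -
  obtain R1 R2 where R: "\<forall>(x, y)\<in>M. dist x y < R1" "\<forall>(x, y)\<in>N. dist x y < R2"
    using assms unfolding bounded_coarse_def by blast
  have "dist (a, b) (a', b') < R1 + R2" if "(a, a') \<in> M" "(b, b') \<in> N" for a a' b b'
    using R that dist_Pair_le[of a b a' b'] by fastforce
  then have "\<forall>(p, q)\<in>prod_ent M N. dist p q < R1 + R2"
    unfolding prod_ent_def by auto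
  moreover have "prod_ent M N \<subseteq> (A \<times> B) \<times> (A \<times> B)"
    using assms unfolding bounded_coarse_def prod_ent_def by auto
  ultimately show ?thesis
    unfolding bounded_coarse_def by blast
qed

lemma prod_comps_subset_bounded_coarse:
  "prod_comps (bounded_coarse A) (bounded_coarse B) \<subseteq> bounded_coarse (A \<times> B)"
proof
  show "P \<in> bounded_coarse (A \<times> B)" if "P \<in> prod_comps (bounded_coarse A) (bounded_coarse B)" for P
    using that
    by (induction rule: prod_comps.induct) (auto intro: prod_ent_bounded_coarse bounded_coarse_relcomp)
qed

lemma prod_coarse_bounded_coarse:
  "prod_coarse (bounded_coarse A) (bounded_coarse B) = bounded_coarse (A \<times> B)"
proof (intro equalityI subsetI)
  fix E assume "E \<in> prod_coarse (bounded_coarse A) (bounded_coarse B)"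
  then obtain F where "finite F" "F \<subseteq> bounded_coarse (A \<times> B)" "E \<subseteq> \<Union>F"
    unfolding prod_coarse_def using prod_comps_subset_bounded_coarse by blast
  then show "E \<in> bounded_coarse (A \<times> B)"
    by (meson bounded_coarse_Union bounded_coarse_subset)
next
  fix E assume E: "E \<in> bounded_coarse (A \<times> B)"
  define M where "M = (\<lambda>(p, q). (fst p, fst q)) ` E"
  define N where "N = (\<lambda>(p, q). (snd p, snd q)) ` E"
  obtain R where R: "\<forall>(p, q)\<in>E. dist p q < R"
    using E unfolding bounded_coarse_def by blast
  have "dist (fst p) (fst q) < R" "dist (snd p) (snd q) < R" if "(p, q) \<in> E" for p q
    using R that dist_fst_le[of p q] dist_snd_le[of p q] by fastforce+
  with E have "M \<in> bounded_coarse A" "N \<in> bounded_coarse B"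
    unfolding bounded_coarse_def M_def N_def by (auto intro!: exI[of _ R])
  then have "prod_ent M N \<in> prod_comps (bounded_coarse A) (bounded_coarse B)"
    by (rule prod_comps.basic)
  moreover have "E \<subseteq> prod_ent M N"
  proof
    fix e assume "e \<in> E"
    then obtain a b a' b' where "e = ((a, b), (a', b'))" "((a, b), (a', b')) \<in> E"
      by (metis prod.collapse)
    then show "e \<in> prod_ent M N"
      unfolding prod_ent_def M_def N_def by force
  qed
  ultimately show "E \<in> prod_coarse (bounded_coarse A) (bounded_coarse B)"
    unfolding prod_coarse_def mem_Collect_eq
    by (intro exI[of _ "{prod_ent M N}"] conjI) simp_all
qed

lemma cbounded_bounded_coarse_iff:
  "cbounded (bounded_coarse S) B \<longleftrightarrow> B \<subseteq> S \<and> bounded B"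
proof
  assume "cbounded (bounded_coarse S) B"
  then obtain M x where M: "M \<in> bounded_coarse S" and B: "B \<subseteq> {y. (y, x) \<in> M}"
    unfolding cbounded_def by blast
  then obtain R where R: "M \<subseteq> S \<times> S" "\<forall>(y, z)\<in>M. dist y z < R"
    unfolding bounded_coarse_def by blast
  have "B \<subseteq> ball x R"
  proof
    fix y assume "y \<in> B"
    then have "dist y x < R"
      using B R(2) by blast
    then show "y \<in> ball x R"
      by (simp add: dist_commute)
  qed
  moreover have "B \<subseteq> S"
    using B R(1) by blast
  ultimately show "B \<subseteq> S \<and> bounded B"
    using bounded_subset bounded_ball by blast
next
  assume B: "B \<subseteq> S \<and> bounded B"
  show "cbounded (bounded_coarse S) B"
  proof (cases "B = {}")
    case True
    have "{} \<in> bounded_coarse S"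
      by (simp add: bounded_coarse_def)
    with True show ?thesis
      unfolding cbounded_def by auto
  next
    case False
    then obtain x where x: "x \<in> B"
      by auto
    from B obtain e where "\<forall>y\<in>B. dist x y \<le> e"
      using bounded_any_center by blast
    then have "\<forall>(y, z)\<in>B \<times> {x}. dist y z < e + 1"
      by (auto simp: dist_commute)
    moreover have "B \<times> {x} \<subseteq> S \<times> S"
      using B x by auto
    ultimately have "B \<times> {x} \<in> bounded_coarse S"
      unfolding bounded_coarse_def by blast
    then show ?thesis
      unfolding cbounded_def by (intro bexI[of _ "B \<times> {x}"] exI[of _ x]) auto
  qed
qed

lemma coarse_map_bounded_coarseI:
  assumes "f ` S \<subseteq> T"
    and "\<And>R. \<exists>R'. \<forall>x\<in>S. \<forall>y\<in>S. dist x y < R \<longrightarrow> dist (f x) (f y) \<le> R'"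
    and "\<And>B. B \<subseteq> T \<Longrightarrow> bounded B \<Longrightarrow> bounded (f -` B \<inter> S)"
  shows "coarse_map S (bounded_coarse S) T (bounded_coarse T) f"
proof -
  have "(\<lambda>(x, y). (f x, f y)) ` M \<in> bounded_coarse T" if M: "M \<in> bounded_coarse S" for M
  proof -
    obtain R where R: "M \<subseteq> S \<times> S" "\<forall>(x, y)\<in>M. dist x y < R"
      using M unfolding bounded_coarse_def by blast
    obtain R' where "\<forall>x\<in>S. \<forall>y\<in>S. dist x y < R \<longrightarrow> dist (f x) (f y) \<le> R'"
      using assms(2) by blast
    with R have "\<forall>(x, y)\<in>M. dist (f x) (f y) < R' + 1"
      by fastforce
    then have "\<forall>(u, v)\<in>(\<lambda>(x, y). (f x, f y)) ` M. dist u v < R' + 1"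
      by auto
    moreover have "(\<lambda>(x, y). (f x, f y)) ` M \<subseteq> T \<times> T"
      using R(1) assms(1) by auto
    ultimately show ?thesis
      unfolding bounded_coarse_def by blast
  qed
  then show ?thesis
    unfolding coarse_map_def cbounded_bounded_coarse_iff using assms(1,3) by auto
qed

lemma coarse_map_bounded_coarse_normI:
  fixes f :: "'a::real_normed_vector \<Rightarrow> 'b::real_normed_vector"
  assumes "f ` S \<subseteq> T"
    and "\<And>R. \<exists>R'. \<forall>x\<in>S. \<forall>y\<in>S. dist x y < R \<longrightarrow> dist (f x) (f y) \<le> R'"
    and "\<And>r. \<exists>r'. \<forall>x\<in>S. norm (f x) \<le> r \<longrightarrow> norm x \<le> r'"
  shows "coarse_map S (bounded_coarse S) T (bounded_coarse T) f"
proof (rule coarse_map_bounded_coarseI[OF assms(1,2)])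
  fix B :: "'b set"
  assume "bounded B"
  then obtain r where r: "\<forall>x\<in>B. norm x \<le> r"
    unfolding bounded_iff by auto
  obtain r' where "\<forall>x\<in>S. norm (f x) \<le> r \<longrightarrow> norm x \<le> r'"
    using assms(3) by blast
  with r show "bounded (f -` B \<inter> S)"
    unfolding bounded_iff by auto
qed

lemma coarse_map_comp:
  assumes f: "coarse_map X EA Y EB f" and g: "coarse_map Y EB Z EC g"
  shows "coarse_map X EA Z EC (g \<circ> f)"
  unfolding coarse_map_def
proof (intro conjI allI ballI impI)
  have "f ` X \<subseteq> Y" "g ` Y \<subseteq> Z"
    using f g unfolding coarse_map_def by auto
  then show "(g \<circ> f) ` X \<subseteq> Z"
    by auto
next
  fix M assume "M \<in> EA"
  then have "(\<lambda>(x, y). (g x, g y)) ` (\<lambda>(x, y). (f x, f y)) ` M \<in> EC"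
    using f g unfolding coarse_map_def by blast
  moreover have "(\<lambda>(x, y). (g x, g y)) ` (\<lambda>(x, y). (f x, f y)) ` M =
      (\<lambda>(x, y). ((g \<circ> f) x, (g \<circ> f) y)) ` M"
    by (auto simp: image_iff)
  ultimately show "(\<lambda>(x, y). ((g \<circ> f) x, (g \<circ> f) y)) ` M \<in> EC"
    by simp
next
  fix B assume "cbounded EC B"
  then have "cbounded EA (f -` (g -` B \<inter> Y) \<inter> X)"
    using f g unfolding coarse_map_def by blast
  moreover have "f -` (g -` B \<inter> Y) \<inter> X = (g \<circ> f) -` B \<inter> X"
    using f unfolding coarse_map_def by auto
  ultimately show "cbounded EA ((g \<circ> f) -` B \<inter> X)"
    by simp
qed

lemma coarse_map_id:
  assumes "E \<subseteq> Pow (X \<times> X)"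
  shows "coarse_map X E X E id"
proof -
  have "B \<subseteq> X" if "cbounded E B" for B
    using that assms unfolding cbounded_def by blast
  then show ?thesis
    unfolding coarse_map_def by (simp add: Int_absorb2)
qed

lemma gen_ray_bounded_coarse: "gen_ray (bounded_coarse {0::real..})"
  unfolding gen_ray_def
proof (intro conjI ballI allI impI)
  show "coarse_structure {0..} (bounded_coarse {0::real..})"
    by (rule coarse_structure_bounded_coarse)
  show "\<exists>M\<in>bounded_coarse {0::real..}. Id_on {0..} \<subseteq> M"
    by (rule bexI[of _ "Id_on {0..}"]) (auto simp: bounded_coarse_def intro!: exI[of _ 1])
next
  fix M assume "M \<in> bounded_coarse {0::real..}"
  then obtain R where R: "M \<subseteq> {0..} \<times> {0..}" "\<forall>(x, y)\<in>M. dist x y < R"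
    unfolding bounded_coarse_def by blast
  define U where "U = ({0::real..} \<times> {0..}) \<inter> {p. dist (fst p) (snd p) < R}"
  have "open {p::real \<times> real. dist (fst p) (snd p) < R}"
    by (intro open_Collect_less continuous_intros)
  then have "openin (top_of_set ({0..} \<times> {0..})) U"
    unfolding U_def by blast
  moreover have "U \<in> bounded_coarse {0..}" "M \<subseteq> U"
    using R unfolding U_def bounded_coarse_def by auto
  ultimately show "\<exists>U\<in>bounded_coarse {0..}. M \<subseteq> U \<and> openin (top_of_set ({0..} \<times> {0..})) U"
    by blast
next
  fix B assume "cbounded (bounded_coarse {0::real..}) B"
  then show "compact (closure B)"
    unfolding cbounded_bounded_coarse_iff by auto
qed

lemma htpy_limit_eqI:
  assumes "\<And>t. t \<ge> T \<Longrightarrow> F (x, t) = l"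
  shows "htpy_limit F x = l"
  unfolding htpy_limit_def
proof (rule the_equality)
  show "\<exists>T\<ge>0. \<forall>t\<ge>T. F (x, t) = l"
    using assms by (intro exI[of _ "max T 0"]) auto
next
  fix l' assume "\<exists>T\<ge>0. \<forall>t\<ge>T. F (x, t) = l'"
  then obtain T' where "\<forall>t\<ge>T'. F (x, t) = l'"
    by auto
  then show "l' = l"
    using assms[of "max T T'"] by simp
qed

lemma coarse_htpy_equivI:
  assumes f: "coarse_map X EA Y EB f" and g: "coarse_map Y EB X EA g"
    and EA: "EA \<subseteq> Pow (X \<times> X)" and EB: "EB \<subseteq> Pow (Y \<times> Y)"
    and gf: "g \<circ> f = id" and fg: "htpy_step Y EB Y EB id (f \<circ> g)"
  shows "coarse_htpy_equiv X EA Y EB f"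
  unfolding coarse_htpy_equiv_def coarsely_homotopic_def
proof (intro conjI exI[of _ g])
  show "coarse_map X EA X EA (g \<circ> f)" "coarse_map X EA X EA id"
    using coarse_map_id[OF EA] by (simp_all add: gf)
  show "coarse_map Y EB Y EB (f \<circ> g)"
    using coarse_map_comp[OF g f] .
  show "coarse_map Y EB Y EB id"
    using coarse_map_id[OF EB] .
  show "(\<lambda>u v. htpy_step X EA X EA u v \<or> htpy_step X EA X EA v u)\<^sup>*\<^sup>* (g \<circ> f) id"
    by (simp add: gf)
  show "(\<lambda>u v. htpy_step Y EB Y EB u v \<or> htpy_step Y EB Y EB v u)\<^sup>*\<^sup>* (f \<circ> g) id"
    using fg by (intro r_into_rtranclp) simp
qed (use f g in simp_all)

definition soft_threshold :: "real \<Rightarrow> real \<Rightarrow> real" where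
  "soft_threshold s a = (if a > s then a - s else if a < -s then a + s else 0)"

lemma soft_threshold_0 [simp]: "soft_threshold 0 a = a"
  unfolding soft_threshold_def by auto

lemma soft_threshold_eq_0: "\<bar>a\<bar> \<le> s \<Longrightarrow> soft_threshold s a = 0"
  unfolding soft_threshold_def by auto

lemma abs_soft_threshold_diff_le:
  "0 \<le> s \<Longrightarrow> 0 \<le> s' \<Longrightarrow>
    \<bar>soft_threshold s a - soft_threshold s' a'\<bar> \<le> \<bar>a - a'\<bar> + \<bar>s - s'\<bar>"
  unfolding soft_threshold_def by auto

lemma abs_le_abs_soft_threshold_add: "0 \<le> s \<Longrightarrow> \<bar>a\<bar> \<le> \<bar>soft_threshold s a\<bar> + s"
  unfolding soft_threshold_def by auto

lemma norm_le_card_mult_cart: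
  fixes x :: "real ^ 'n"
  assumes "\<And>i. \<bar>x $ i\<bar> \<le> c"
  shows "norm x \<le> real CARD('n) * c"
proof -
  have "norm x \<le> (\<Sum>i\<in>UNIV. \<bar>x $ i\<bar>)"
    by (rule norm_le_l1_cart)
  also have "\<dots> \<le> (\<Sum>i\<in>(UNIV :: 'n set). c)"
    using assms by (rule sum_mono)
  finally show ?thesis
    by simp
qed

definition collapse_htpy :: "((real ^ 'n) \<times> real) \<times> real \<Rightarrow> (real ^ 'n) \<times> real" where
  "collapse_htpy = (\<lambda>((x, t), s). (\<chi> i. soft_threshold s (x $ i), t + min s (norm x)))"

lemma collapse_htpy_simp [simp]:
  "collapse_htpy ((x, t), s) = (\<chi> i. soft_threshold s (x $ i), t + min s (norm x))"
  unfolding collapse_htpy_def by simp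

lemma collapse_htpy_0: "collapse_htpy (p, 0) = p"
  by (cases p) (simp add: vec_eq_iff)

lemma collapse_htpy_stable:
  assumes "norm x \<le> s"
  shows "collapse_htpy ((x, t), s) = (0, t + norm x)"
proof -
  have "\<bar>x $ i\<bar> \<le> s" for i
    using component_le_norm_cart[of x i] assms by linarith
  with assms show ?thesis
    by (simp add: vec_eq_iff soft_threshold_eq_0)
qed

lemma htpy_limit_collapse_htpy:
  "htpy_limit collapse_htpy = (\<lambda>s. (0, s)) \<circ> (\<lambda>(x, t). norm x + t)"
proof
  fix p :: "(real ^ 'n) \<times> real"
  obtain x t where "p = (x, t)"
    by fastforce
  moreover have "htpy_limit collapse_htpy (x, t) = (0, t + norm x)"
    by (rule htpy_limit_eqI[of "norm x"], erule collapse_htpy_stable)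
  ultimately show "htpy_limit collapse_htpy p = ((\<lambda>s. (0, s)) \<circ> (\<lambda>(x, t). norm x + t)) p"
    by (simp add: add.commute)
qed

lemma dist_collapse_htpy_le:
  fixes x x' :: "real ^ 'n"
  assumes "0 \<le> s" "0 \<le> s'"
  shows "dist (collapse_htpy ((x, t), s)) (collapse_htpy ((x', t'), s'))
    \<le> (real CARD('n) + 1) * (dist x x' + dist s s') + dist t t'"
proof -
  have "\<bar>soft_threshold s (x $ i) - soft_threshold s' (x' $ i)\<bar> \<le> dist x x' + dist s s'" for i
    using abs_soft_threshold_diff_le[OF assms, of "x $ i" "x' $ i"]
      component_le_norm_cart[of "x - x'" i]
    by (simp add: dist_norm dist_real_def)
  then have "norm ((\<chi> i. soft_threshold s (x $ i)) - (\<chi> i. soft_threshold s' (x' $ i)))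
      \<le> real CARD('n) * (dist x x' + dist s s')"
    by (intro norm_le_card_mult_cart) simp
  then have "dist (\<chi> i. soft_threshold s (x $ i)) (\<chi> i. soft_threshold s' (x' $ i))
      \<le> real CARD('n) * (dist x x' + dist s s')"
    by (simp add: dist_norm)
  moreover have "dist (t + min s (norm x)) (t' + min s' (norm x')) \<le> dist t t' + dist s s' + dist x x'"
    using norm_triangle_ineq3[of x x'] by (simp add: dist_norm dist_real_def)
  moreover have "(real CARD('n) + 1) * (dist x x' + dist s s')
      = real CARD('n) * (dist x x' + dist s s') + dist x x' + dist s s'"
    by (simp add: algebra_simps)
  ultimately show ?thesis
    using dist_Pair_le[of "\<chi> i. soft_threshold s (x $ i)" "t + min s (norm x)"
        "\<chi> i. soft_threshold s' (x' $ i)" "t' + min s' (norm x')"]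
    by simp
qed

lemma norm_le_of_norm_collapse_htpy_le:
  fixes x :: "real ^ 'n"
  assumes "0 \<le> s" "0 \<le> t" "norm (collapse_htpy ((x, t), s), s) \<le> r"
  shows "norm ((x, t), s) \<le> 2 * (real CARD('n) + 1) * r"
proof -
  have "norm s \<le> r" and H: "norm (\<chi> i. soft_threshold s (x $ i), t + min s (norm x)) \<le> r"
    using order_trans[OF norm_snd_le assms(3)] order_trans[OF norm_fst_le assms(3)] by simp_all
  then have s: "s \<le> r"
    using assms(1) by simp
  have "norm (\<chi> i. soft_threshold s (x $ i)) \<le> r" "norm (t + min s (norm x)) \<le> r"
    using order_trans[OF norm_fst_le H] order_trans[OF norm_snd_le H] .
  then have st: "norm (\<chi> i. soft_threshold s (x $ i)) \<le> r" and "t + min s (norm x) \<le> r"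
    by simp_all
  moreover have "0 \<le> min s (norm x)"
    using assms(1) by simp
  ultimately have t: "t \<le> r"
    by linarith
  have "\<bar>x $ i\<bar> \<le> 2 * r" for i
  proof -
    have "\<bar>soft_threshold s (x $ i)\<bar> \<le> r"
      using component_le_norm_cart[of "\<chi> i. soft_threshold s (x $ i)" i] st by simp
    then show ?thesis
      using abs_le_abs_soft_threshold_add[OF assms(1), of "x $ i"] s by linarith
  qed
  then have "norm x \<le> real CARD('n) * (2 * r)"
    by (rule norm_le_card_mult_cart)
  moreover have "norm ((x, t), s) \<le> norm x + \<bar>t\<bar> + \<bar>s\<bar>"
    using norm_Pair_le[of "(x, t)" s] norm_Pair_le[of x t] by simp
  ultimately show ?thesis
    using s t assms(1,2) by (simp add: algebra_simps)
qed

lemma coarse_map_collapse_htpy: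
  "coarse_map ((UNIV \<times> {0..}) \<times> {0..}) (bounded_coarse ((UNIV \<times> {0..}) \<times> {0..}))
     ((UNIV \<times> {0..}) \<times> {0..}) (bounded_coarse ((UNIV \<times> {0..}) \<times> {0..}))
     (\<lambda>(p, s). (collapse_htpy (p, s) :: (real ^ 'n) \<times> real, s))"
proof (rule coarse_map_bounded_coarse_normI)
  fix R :: real
  let ?C = "real CARD('n) + 1"
  show "\<exists>R'. \<forall>p\<in>(UNIV \<times> {0..}) \<times> {0..}. \<forall>q\<in>(UNIV \<times> {0..}) \<times> {0..}. dist p q < R \<longrightarrow>
      dist ((\<lambda>(p, s). (collapse_htpy (p, s) :: (real ^ 'n) \<times> real, s)) p)
        ((\<lambda>(p, s). (collapse_htpy (p, s), s)) q) \<le> R'"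
  proof (intro exI[of _ "?C * (R + R) + R + R"] ballI impI)
    fix p q :: "((real ^ 'n) \<times> real) \<times> real"
    assume "p \<in> (UNIV \<times> {0..}) \<times> {0..}" "q \<in> (UNIV \<times> {0..}) \<times> {0..}" and pq: "dist p q < R"
    then obtain x t s x' t' s' where pq_eq: "p = ((x, t), s)" "q = ((x', t'), s')"
      and s: "0 \<le> s" "0 \<le> s'"
      by auto
    have "dist (x, t) (x', t') < R" "dist s s' < R"
      using pq dist_fst_le[of p q] dist_snd_le[of p q] unfolding pq_eq by auto
    then have "dist x x' < R" "dist t t' < R" "dist s s' < R"
      using dist_fst_le[of "(x, t)" "(x', t')"] dist_snd_le[of "(x, t)" "(x', t')"] by auto
    have "dist (collapse_htpy ((x, t), s), s) (collapse_htpy ((x', t'), s'), s')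
        \<le> dist (collapse_htpy ((x, t), s)) (collapse_htpy ((x', t'), s')) + dist s s'"
      by (rule dist_Pair_le)
    also have "\<dots> \<le> ?C * (dist x x' + dist s s') + dist t t' + dist s s'"
      using dist_collapse_htpy_le[OF s] by (simp only: add_le_cancel_right)
    also have "\<dots> \<le> ?C * (R + R) + R + R"
    proof -
      have "?C * (dist x x' + dist s s') \<le> ?C * (R + R)"
        using \<open>dist x x' < R\<close> \<open>dist s s' < R\<close> by (intro mult_left_mono) auto
      then show ?thesis
        using \<open>dist t t' < R\<close> \<open>dist s s' < R\<close> by linarith
    qed
    finally show "dist ((\<lambda>(p, s). (collapse_htpy (p, s), s)) p)
        ((\<lambda>(p, s). (collapse_htpy (p, s), s)) q) \<le> ?C * (R + R) + R + R"
      unfolding pq_eq by simp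
  qed
next
  fix r :: real
  show "\<exists>r'. \<forall>p\<in>(UNIV \<times> {0..}) \<times> {0..}.
      norm ((\<lambda>(p, s). (collapse_htpy (p, s) :: (real ^ 'n) \<times> real, s)) p) \<le> r \<longrightarrow> norm p \<le> r'"
    using norm_le_of_norm_collapse_htpy_le
    by (intro exI[of _ "2 * (real CARD('n) + 1) * r"]) auto
qed (auto simp: collapse_htpy_def)

lemma coarse_map_ray_inclusion:
  "coarse_map {0::real..} (bounded_coarse {0..}) (UNIV \<times> {0..}) (bounded_coarse (UNIV \<times> {0..}))
     (\<lambda>s. (0 :: 'a::real_normed_vector, s))"
proof (rule coarse_map_bounded_coarse_normI)
  fix R :: real
  show "\<exists>R'. \<forall>s\<in>{0..}. \<forall>s'\<in>{0..}. dist s s' < R \<longrightarrow>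
      dist (0 :: 'a, s) (0, s') \<le> R'"
    by (intro exI[of _ R]) (auto simp: dist_Pair_Pair)
next
  fix r :: real
  show "\<exists>r'. \<forall>s\<in>{0..}. norm (0 :: 'a, s) \<le> r \<longrightarrow> norm s \<le> r'"
    by (intro exI[of _ r]) (auto simp: norm_Pair)
qed auto

lemma coarse_map_norm_add:
  "coarse_map (UNIV \<times> {0::real..}) (bounded_coarse (UNIV \<times> {0..})) {0..} (bounded_coarse {0..})
     (\<lambda>(x :: 'a::real_normed_vector, t). norm x + t)"
proof (rule coarse_map_bounded_coarse_normI)
  fix R :: real
  have "dist (norm x + t) (norm x' + t') \<le> 2 * R" if "dist (x, t) (x', t') < R" for x x' :: 'a and t t'
  proof -
    have "dist x x' < R" "dist t t' < R"
      using that dist_fst_le[of "(x, t)" "(x', t')"] dist_snd_le[of "(x, t)" "(x', t')"] by auto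
    then show ?thesis
      using norm_triangle_ineq3[of x x'] by (simp add: dist_norm dist_real_def)
  qed
  then show "\<exists>R'. \<forall>p\<in>UNIV \<times> {0..}. \<forall>q\<in>UNIV \<times> {0..}. dist p q < R \<longrightarrow>
      dist ((\<lambda>(x :: 'a, t). norm x + t) p) ((\<lambda>(x, t). norm x + t) q) \<le> R'"
    by (intro exI[of _ "2 * R"]) auto
next
  fix r :: real
  have "norm (x, t) \<le> 2 * r" if "0 \<le> t" "norm (norm x + t) \<le> r" for x :: 'a and t
    using that norm_Pair_le[of x t] norm_ge_zero[of x] by (smt (verit) real_norm_def)
  then show "\<exists>r'. \<forall>p\<in>UNIV \<times> {0..}. norm ((\<lambda>(x :: 'a, t). norm x + t) p) \<le> r \<longrightarrow> norm p \<le> r'"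
    by (intro exI[of _ "2 * r"]) auto
qed auto

lemma htpy_step_id_collapse:
  "htpy_step (UNIV \<times> {0..}) (bounded_coarse (UNIV \<times> {0..}))
     (UNIV \<times> {0..}) (bounded_coarse (UNIV \<times> {0..}))
     id ((\<lambda>s. (0 :: real ^ 'n, s)) \<circ> (\<lambda>(x, t). norm x + t))"
proof -
  let ?Y = "UNIV \<times> {0::real..} :: ((real ^ 'n) \<times> real) set"
  have "coarse_homotopy ?Y (bounded_coarse ?Y) ?Y (bounded_coarse ?Y) (bounded_coarse {0..}) collapse_htpy"
    unfolding coarse_homotopy_def prod_coarse_bounded_coarse htpy_limit_collapse_htpy
  proof (intro conjI allI impI)
    show "gen_ray (bounded_coarse {0..})"
      by (rule gen_ray_bounded_coarse)
    show "coarse_map (?Y \<times> {0..}) (bounded_coarse (?Y \<times> {0..})) (?Y \<times> {0..})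
        (bounded_coarse (?Y \<times> {0..})) (\<lambda>(p, s). (collapse_htpy (p, s), s))"
      by (rule coarse_map_collapse_htpy)
    show "coarse_map ?Y (bounded_coarse ?Y) ?Y (bounded_coarse ?Y)
        ((\<lambda>s. (0, s)) \<circ> (\<lambda>(x, t). norm x + t))"
      by (rule coarse_map_comp[OF coarse_map_norm_add coarse_map_ray_inclusion])
  next
    fix B assume "B \<subseteq> ?Y \<and> cbounded (bounded_coarse ?Y) B"
    then have "bounded B"
      by (simp add: cbounded_bounded_coarse_iff)
    then obtain r where r: "\<And>p. p \<in> B \<Longrightarrow> norm p \<le> r"
      unfolding bounded_iff by blast
    have stable: "collapse_htpy (p, s) = collapse_htpy (p, s')"
      if "p \<in> B" "max r 0 \<le> s" "max r 0 \<le> s'" for p s s'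
    proof -
      obtain x t where p: "p = (x, t)"
        by (cases p)
      have "norm x \<le> norm p"
        using norm_fst_le[of x t] unfolding p .
      also have "\<dots> \<le> r"
        using r[OF that(1)] .
      finally have "norm x \<le> s" "norm x \<le> s'"
        using that(2,3) by linarith+
      then have "collapse_htpy ((x, t), s) = collapse_htpy ((x, t), s')"
        by (simp only: collapse_htpy_stable)
      then show ?thesis
        unfolding p .
    qed
    show "\<exists>T\<ge>0. \<forall>p\<in>B. \<forall>s\<ge>T. \<forall>s'\<ge>T. collapse_htpy (p, s) = collapse_htpy (p, s')"
    proof (intro exI[of _ "max r 0"] conjI ballI allI impI)
      fix p s s' assume "p \<in> B" "max r 0 \<le> s" "max r 0 \<le> s'"
      then show "collapse_htpy (p, s) = collapse_htpy (p, s')"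
        by (rule stable)
    qed simp
  qed
  then show ?thesis
    unfolding htpy_step_def
    by (intro exI[of _ "bounded_coarse {0..}"] exI[of _ collapse_htpy] conjI ballI)
      (simp_all add: collapse_htpy_0 htpy_limit_collapse_htpy)
qed

theorem mainTheorem5:
  shows "coarse_htpy_equiv {0::real..} (bounded_coarse {0..})
           (UNIV \<times> {0::real..})
           (prod_coarse (bounded_coarse (UNIV :: (real ^ 'n) set)) (bounded_coarse {0::real..}))
           (\<lambda>s. (0, s))"
  unfolding prod_coarse_bounded_coarse
proof (rule coarse_htpy_equivI[OF coarse_map_ray_inclusion coarse_map_norm_add])
  show "(\<lambda>(x, t). norm x + t) \<circ> (\<lambda>s. (0 :: real ^ 'n, s)) = id"
    by auto
  show "htpy_step (UNIV \<times> {0..}) (bounded_coarse (UNIV \<times> {0..})) (UNIV \<times> {0..})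
      (bounded_coarse (UNIV \<times> {0..})) id ((\<lambda>s. (0 :: real ^ 'n, s)) \<circ> (\<lambda>(x, t). norm x + t))"
    by (rule htpy_step_id_collapse)
qed (auto simp: bounded_coarse_def)

end
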